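(* Let $\gamma\in(0,1)$. For every $\varepsilon>0$ there exists a constant $C=C(\gamma,\varepsilon)$ such that the following holds. Let $T\ge1$, let $\xi=(\xi_1,\dots,\xi_T)$ be i.i.d. Bernoulli($\gamma$) random variables, let $N:\{0,1\}^T\to\{0,1,\dots,T\}$ be any deterministic function, and set $S(\xi,m)=\sum_{i=1}^m\xi_i$. If $\mathbb E[N(\xi)]\ge C$, then $$(\gamma-\varepsilon)\,\mathbb E[N(\xi)]\le\mathbb E[S(\xi,N(\xi))]\le(\gamma+\varepsilon)\,\mathbb E[N(\xi)].$$ (That is, $\mathbb E[S(\xi,N(\xi))]/\mathbb E[N(\xi)]\to\gamma$ as $\mathbb E[N(\xi)]\to\infty$, uniformly in $T$ and $N$.) *)

theory Defs
  imports "HOL-Probability.Probability"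
begin

text \<open>The law of xi = (xi_1,...,xi_T), i.i.d. Bernoulli(gamma), encoded as a random
  function on indices 0..T-1 (coordinate i+1 of the paper is index i here);
  coordinates outside {..<T} are fixed to False.\<close>
definition bern_vec :: "real \<Rightarrow> nat \<Rightarrow> (nat \<Rightarrow> bool) pmf" where
  "bern_vec \<gamma> T = Pi_pmf {..<T} False (\<lambda>_. bernoulli_pmf \<gamma>)"

definition S :: "(nat \<Rightarrow> bool) \<Rightarrow> nat \<Rightarrow> nat" where
  "S x m = (\<Sum>i<m. of_bool (x i))"

end

theory Submission
  imports Defs
begin

text \<open>For each fixed \<open>m\<close>, Hoeffding's inequality for the binomial law of \<open>S(\<xi>, m)\<close> gives
  \<open>P(|S(\<xi>, m) - \<gamma> m| \<ge> \<delta> m) \<le> 2 q^m\<close> with \<open>q = exp(-2\<delta>^2)\<close>, so the excess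
  \<open>max 0 (|S(\<xi>, m) - \<gamma> m| - \<delta> m)\<close>, which never exceeds \<open>m\<close>, has expectation at most \<open>2 m q^m\<close>.
  Whatever value \<open>N(\<xi>)\<close> takes, the excess at \<open>m = N(\<xi>)\<close> is dominated by the sum of the
  excesses over all \<open>m \<le> T\<close>, hence \<open>|E S(\<xi>, N(\<xi>)) - \<gamma> E N(\<xi>)| \<le> \<delta> E N(\<xi>) + K\<close> with
  \<open>K = 2 \<Sum>\<^sub>m m q^m\<close> independent of \<open>T\<close> and \<open>N\<close>. Take \<open>\<delta> = \<epsilon>/2\<close> and \<open>C = K/\<delta>\<close>.\<close>

lemma summable_of_nat_mult_power:
  fixes q :: real
  assumes "0 \<le> q" "q < 1"
  shows "summable (\<lambda>n. real n * q ^ n)"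
proof -
  have "summable (\<lambda>n. diffs (\<lambda>_. 1::real) n * q ^ n)"
    by (rule termdiff_converges[where K=1]) (use assms in \<open>auto intro: summable_geometric\<close>)
  then have "summable (\<lambda>n. real (Suc n) * q ^ n)"
    by (simp add: diffs_def)
  then show ?thesis
    by (rule summable_comparison_test') (use assms in \<open>auto intro!: mult_right_mono\<close>)
qed

lemma S_le: "S x m \<le> m"
proof -
  have "S x m \<le> (\<Sum>i<m. 1)"
    unfolding S_def by (intro sum_mono) auto
  then show ?thesis by simp
qed

lemma finite_set_pmf_bern_vec: "finite (set_pmf (bern_vec \<gamma> T))"
proof (rule finite_subset)
  show "set_pmf (bern_vec \<gamma> T) \<subseteq> PiE_dflt {..<T} False (\<lambda>_. UNIV)"
    using set_Pi_pmf_subset[of "{..<T}" False "\<lambda>_. bernoulli_pmf \<gamma>"]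
    unfolding bern_vec_def PiE_dflt_def by auto
  show "finite (PiE_dflt {..<T} False (\<lambda>_. UNIV :: bool set))"
    by (rule finite_PiE_dflt) auto
qed

lemma integrable_bern_vec [simp]: "integrable (measure_pmf (bern_vec \<gamma> T)) (f :: _ \<Rightarrow> real)"
  by (rule integrable_measure_pmf_finite[OF finite_set_pmf_bern_vec])

lemma map_pmf_S_bern_vec:
  assumes "m \<le> T" "\<gamma> \<in> {0..1}"
  shows "map_pmf (\<lambda>x. S x m) (bern_vec \<gamma> T) = binomial_pmf m \<gamma>"
proof -
  let ?restrict = "\<lambda>f i. if i \<in> {..<m} then f i else False"
  have "binomial_pmf m \<gamma> = map_pmf (\<lambda>f. card {i\<in>{..<m}. f i}) (Pi_pmf {..<m} False (\<lambda>_. bernoulli_pmf \<gamma>))"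
    by (rule binomial_pmf_altdef') (use assms in auto)
  also have "Pi_pmf {..<m} False (\<lambda>_. bernoulli_pmf \<gamma>) = map_pmf ?restrict (bern_vec \<gamma> T)"
    unfolding bern_vec_def by (rule Pi_pmf_subset) (use assms in auto)
  also have "map_pmf (\<lambda>f. card {i\<in>{..<m}. f i}) (map_pmf ?restrict (bern_vec \<gamma> T))
      = map_pmf (\<lambda>x. S x m) (bern_vec \<gamma> T)"
    unfolding map_pmf_comp S_def by (intro map_pmf_cong refl) (auto intro!: arg_cong[where f=card])
  finally show ?thesis ..
qed

lemma prob_S_deviation_ge:
  assumes "m \<le> T" "\<gamma> \<in> {0..1}" "\<delta> \<ge> 0"
  shows "measure_pmf.prob (bern_vec \<gamma> T) {x. \<delta> * m \<le> \<bar>real (S x m) - m * \<gamma>\<bar>}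
           \<le> 2 * exp (-2 * \<delta>\<^sup>2) ^ m"
proof (cases "m = 0")
  case True
  then show ?thesis by simp
next
  case False
  then have "m > 0" by simp
  interpret binomial_distribution m \<gamma>
    using assms \<open>m > 0\<close> by unfold_locales auto
  have "measure_pmf.prob (bern_vec \<gamma> T) {x. \<delta> * m \<le> \<bar>real (S x m) - m * \<gamma>\<bar>}
      = measure_pmf.prob (binomial_pmf m \<gamma>) {k. \<bar>real k - m * \<gamma>\<bar> \<ge> \<delta> * m}"
    by (subst map_pmf_S_bern_vec[symmetric]) (use assms in auto)
  also have "\<dots> \<le> 2 * exp (-2 * (\<delta> * m)\<^sup>2 / m)"
    by (rule prob_abs_ge) (use assms \<open>m > 0\<close> in auto)
  also have "-2 * (\<delta> * m)\<^sup>2 / m = real m * (-2 * \<delta>\<^sup>2)"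
    using False by (simp add: power2_eq_square)
  also have "exp (real m * (-2 * \<delta>\<^sup>2)) = exp (-2 * \<delta>\<^sup>2) ^ m"
    by (rule exp_of_nat_mult)
  finally show ?thesis .
qed

lemma expectation_S_excess_le:
  assumes "m \<le> T" "\<gamma> \<in> {0..1}" "\<delta> \<ge> 0"
  shows "measure_pmf.expectation (bern_vec \<gamma> T) (\<lambda>x. max 0 (\<bar>real (S x m) - m * \<gamma>\<bar> - \<delta> * m))
           \<le> 2 * real m * exp (-2 * \<delta>\<^sup>2) ^ m"
proof -
  let ?A = "{x. \<delta> * m \<le> \<bar>real (S x m) - m * \<gamma>\<bar>}"
  have "measure_pmf.expectation (bern_vec \<gamma> T) (\<lambda>x. max 0 (\<bar>real (S x m) - m * \<gamma>\<bar> - \<delta> * m))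
      \<le> measure_pmf.expectation (bern_vec \<gamma> T) (\<lambda>x. real m * indicator ?A x)"
  proof (rule integral_mono)
    fix x
    have "0 \<le> m * \<gamma>" "m * \<gamma> \<le> m"
      using assms mult_left_le[of \<gamma> "real m"] by auto
    then have "\<bar>real (S x m) - m * \<gamma>\<bar> \<le> m"
      using S_le[of x m] by linarith
    moreover have "0 \<le> \<delta> * m"
      using assms by simp
    ultimately show "max 0 (\<bar>real (S x m) - m * \<gamma>\<bar> - \<delta> * m) \<le> real m * indicator ?A x"
      by (auto simp: indicator_def)
  qed auto
  also have "\<dots> = real m * measure_pmf.prob (bern_vec \<gamma> T) ?A"
    by simp
  also have "\<dots> \<le> real m * (2 * exp (-2 * \<delta>\<^sup>2) ^ m)"
    by (intro mult_left_mono prob_S_deviation_ge) (use assms in auto)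
  finally show ?thesis
    by simp
qed

lemma expectation_S_stopped_deviation_le:
  assumes "\<gamma> \<in> {0..1}" "\<delta> \<ge> 0" "\<forall>x. N x \<le> T"
  shows "\<bar>measure_pmf.expectation (bern_vec \<gamma> T) (\<lambda>x. real (S x (N x)))
            - \<gamma> * measure_pmf.expectation (bern_vec \<gamma> T) (\<lambda>x. real (N x))\<bar>
           \<le> \<delta> * measure_pmf.expectation (bern_vec \<gamma> T) (\<lambda>x. real (N x))
             + 2 * (\<Sum>m\<le>T. real m * exp (-2 * \<delta>\<^sup>2) ^ m)"
proof -
  let ?E = "measure_pmf.expectation (bern_vec \<gamma> T)"
  let ?excess = "\<lambda>x m. max 0 (\<bar>real (S x m) - m * \<gamma>\<bar> - \<delta> * m)"
  have "\<bar>?E (\<lambda>x. real (S x (N x))) - \<gamma> * ?E (\<lambda>x. real (N x))\<bar>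
      = \<bar>?E (\<lambda>x. real (S x (N x)) - N x * \<gamma>)\<bar>"
    by (simp add: mult.commute)
  also have "\<dots> \<le> ?E (\<lambda>x. \<bar>real (S x (N x)) - N x * \<gamma>\<bar>)"
    by (rule integral_abs_bound)
  also have "\<dots> \<le> ?E (\<lambda>x. \<delta> * N x + (\<Sum>m\<le>T. ?excess x m))"
  proof (rule integral_mono)
    fix x
    have "\<bar>real (S x (N x)) - N x * \<gamma>\<bar> \<le> \<delta> * N x + ?excess x (N x)"
      by linarith
    also have "?excess x (N x) \<le> (\<Sum>m\<le>T. ?excess x m)"
      by (rule member_le_sum) (use assms in auto)
    finally show "\<bar>real (S x (N x)) - N x * \<gamma>\<bar> \<le> \<delta> * N x + (\<Sum>m\<le>T. ?excess x m)"
      by simp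
  qed auto
  also have "\<dots> = \<delta> * ?E (\<lambda>x. real (N x)) + (\<Sum>m\<le>T. ?E (\<lambda>x. ?excess x m))"
    by (simp add: Bochner_Integration.integral_sum)
  also have "(\<Sum>m\<le>T. ?E (\<lambda>x. ?excess x m)) \<le> (\<Sum>m\<le>T. 2 * real m * exp (-2 * \<delta>\<^sup>2) ^ m)"
    by (intro sum_mono expectation_S_excess_le) (use assms in auto)
  finally show ?thesis
    by (simp add: sum_distrib_left mult.assoc)
qed

theorem mainTheorem11:
  fixes \<gamma> \<epsilon> :: real
  assumes "0 < \<gamma>" "\<gamma> < 1" "\<epsilon> > 0"
  shows "\<exists>C::real. \<forall>(T::nat) (N::(nat \<Rightarrow> bool) \<Rightarrow> nat).
           T \<ge> 1 \<longrightarrow> (\<forall>x. N x \<le> T) \<longrightarrow>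
           measure_pmf.expectation (bern_vec \<gamma> T) (\<lambda>x. real (N x)) \<ge> C \<longrightarrow>
           (\<gamma> - \<epsilon>) * measure_pmf.expectation (bern_vec \<gamma> T) (\<lambda>x. real (N x))
              \<le> measure_pmf.expectation (bern_vec \<gamma> T) (\<lambda>x. real (S x (N x))) \<and>
           measure_pmf.expectation (bern_vec \<gamma> T) (\<lambda>x. real (S x (N x)))
              \<le> (\<gamma> + \<epsilon>) * measure_pmf.expectation (bern_vec \<gamma> T) (\<lambda>x. real (N x))"
proof -
  define \<delta> where "\<delta> = \<epsilon> / 2"
  define q where "q = exp (-2 * \<delta>\<^sup>2)"
  define K where "K = 2 * (\<Sum>m. real m * q ^ m)"
  have "\<delta> > 0" "0 \<le> q" "q < 1"
    using assms by (auto simp: \<delta>_def q_def)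
  have K_bound: "2 * (\<Sum>m\<le>T. real m * q ^ m) \<le> K" for T
    unfolding K_def using summable_of_nat_mult_power[OF \<open>0 \<le> q\<close> \<open>q < 1\<close>] \<open>0 \<le> q\<close>
    by (auto intro!: sum_le_suminf)
  show ?thesis
  proof (intro exI[of _ "K / \<delta>"] allI impI)
    fix T :: nat and N :: "(nat \<Rightarrow> bool) \<Rightarrow> nat"
    assume "\<forall>x. N x \<le> T" "K / \<delta> \<le> measure_pmf.expectation (bern_vec \<gamma> T) (\<lambda>x. real (N x))"
    let ?EN = "measure_pmf.expectation (bern_vec \<gamma> T) (\<lambda>x. real (N x))"
    let ?ES = "measure_pmf.expectation (bern_vec \<gamma> T) (\<lambda>x. real (S x (N x)))"
    have "K \<le> \<delta> * ?EN"
      using \<open>K / \<delta> \<le> ?EN\<close> \<open>\<delta> > 0\<close> by (simp add: field_simps)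
    moreover have "\<bar>?ES - \<gamma> * ?EN\<bar> \<le> \<delta> * ?EN + K"
      using expectation_S_stopped_deviation_le[of \<gamma> \<delta> N T] K_bound[of T] assms \<open>\<delta> > 0\<close>
        \<open>\<forall>x. N x \<le> T\<close> unfolding q_def by fastforce
    ultimately show "(\<gamma> - \<epsilon>) * ?EN \<le> ?ES \<and> ?ES \<le> (\<gamma> + \<epsilon>) * ?EN"
      unfolding \<delta>_def by (auto simp: algebra_simps abs_le_iff)
  qed
qed

end
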